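(* Let $\ell\ge2$ be an integer and $n=\frac{3^\ell+1}{2}$. Let $\beta$ be a primitive $2n$-th root of unity in an extension field of $\mathrm{GF}(3)$ and let $\mathbb{M}_\beta(x)$ be its minimal polynomial over $\mathrm{GF}(3)$. Let $\mathcal{C}(\ell)$ be the ternary negacyclic code of length $n$ with check polynomial $\mathbb{M}_\beta(x)$. Then $\mathcal{C}(\ell)$ has parameters $[n,2\ell,d]$ with $d\ge\frac{3^{\ell-1}+1}{2}$, and $\mathcal{C}(\ell)^\perp$ has parameters $[n,n-2\ell,5]$.
   Context: A ternary negacyclic code of length $n$ is an ideal of $\mathrm{GF}(3)[x]/(x^n+1)$; a code with check polynomial $h(x)$ (a monic divisor of $x^n+1$) is the one with generator polynomial $(x^n+1)/h(x)$. $[n,k,d]$ denotes length, dimension, minimum Hamming distance; $\perp$ is the Euclidean dual. *)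

theory Defs
  imports "Berlekamp_Zassenhaus.Finite_Field"
begin

text \<open>The prime field GF(3) is modelled as ''p mod_ring with CARD('p) = 3.
  An extension field of GF(3) is a field 'k of characteristic 3; GF(3) embeds
  into it canonically via the map below.\<close>

definition gf_emb :: "'p::prime_card mod_ring \<Rightarrow> 'k::field" where
  "gf_emb a = of_int (to_int_mod_ring a)"

definition primitive_root_of_unity :: "nat \<Rightarrow> 'k::field \<Rightarrow> bool" where
  "primitive_root_of_unity m b \<longleftrightarrow> b ^ m = 1 \<and> (\<forall>k. 0 < k \<and> k < m \<longrightarrow> b ^ k \<noteq> 1)"

definition is_min_poly :: "'k::field \<Rightarrow> 'p::prime_card mod_ring poly \<Rightarrow> bool" where
  "is_min_poly b m \<longleftrightarrow> monic m \<and> poly (map_poly gf_emb m) b = 0 \<and>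
     (\<forall>q::'p mod_ring poly. q \<noteq> 0 \<longrightarrow> poly (map_poly gf_emb q) b = 0 \<longrightarrow> degree m \<le> degree q)"

text \<open>Words of length n are identified with polynomials of degree < n
  (coefficient i = i-th coordinate). x^n + 1:\<close>
definition negacyc_mod :: "nat \<Rightarrow> 'a::comm_ring_1 poly" where
  "negacyc_mod n = monom 1 n + 1"

text \<open>The negacyclic code of length n with check polynomial h: the ideal of
  GF(q)[x]/(x^n+1) generated by g = (x^n+1)/h, represented by the reduced
  residues.\<close>
definition negacyclic_code_check ::
  "nat \<Rightarrow> 'a::field poly \<Rightarrow> 'a poly set" where
  "negacyclic_code_check n h =
     {(a * (negacyc_mod n div h)) mod negacyc_mod n | a. True}"

definition hamming_dist :: "nat \<Rightarrow> 'a::zero poly \<Rightarrow> 'a poly \<Rightarrow> nat" where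
  "hamming_dist n c c' = card {i. i < n \<and> coeff c i \<noteq> coeff c' i}"

definition min_distance :: "nat \<Rightarrow> 'a::zero poly set \<Rightarrow> nat" where
  "min_distance n C = Min {hamming_dist n c c' | c c'. c \<in> C \<and> c' \<in> C \<and> c \<noteq> c'}"

definition dual_code :: "nat \<Rightarrow> 'a::comm_ring_1 poly set \<Rightarrow> 'a poly set" where
  "dual_code n C = {v. degree v < n \<and> (\<forall>c\<in>C. (\<Sum>i<n. coeff c i * coeff v i) = 0)}"

abbreviation code_dim :: "'a::field poly set \<Rightarrow> nat" where
  "code_dim C \<equiv> vector_space.dim (smult :: 'a \<Rightarrow> 'a poly \<Rightarrow> 'a poly) C"

end

(*
  The code is the trace code: its words are (Tr (t \<beta>^i))_{i<n} for t in GF(3^2l).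
  Since 3 has order 2l modulo 2n = 3^l + 1, the minimal polynomial M of \<beta> has degree 2l,
  and a root count shows that these n-tuples are exactly the multiples of (x^n + 1)/M of
  degree < n. Nondegeneracy of the trace then identifies the dual with the words v of length n
  with v(\<beta>) = 0, i.e. the multiples of M.

  As \<beta>^(3^l) = \<beta>^-1, on the 2n-th roots of unity u the function u^(3^(l-1)) Tr (t u) is a
  polynomial of degree 2 * 3^(l-1); its roots \<beta>^i and \<beta>^(i+n) bound the number of zero
  coordinates of a nonzero codeword by 3^(l-1), whence d \<ge> n - 3^(l-1) = (3^(l-1) + 1) / 2.

  A dual word of weight w gives w pairwise non-opposite points \<plusminus>\<beta>^i of the circle of
  2n-th roots of unity with zero sum, and applying x \<mapsto> x^(3^l) = x^-1 also with zero sum of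
  inverses; in characteristic 3 this is impossible for w \<le> 4. Weight 5 is attained by
  x + x^-1 + y + y^-1 - 1 = 0 with x + x^-1 = t and y + y^-1 = 1 - t, where a suitable t in
  GF(3^l) exists because x \<mapsto> x + x^-1 takes at least (3^l - 3)/2 values in GF(3^l) - {0, \<plusminus>1}.
*)
theory Submission
  imports Defs
begin

lemma card_le_degree_if_roots:
  fixes p :: "'a::idom poly"
  assumes "p \<noteq> 0" and "\<And>x. x \<in> A \<Longrightarrow> poly p x = 0"
  shows "card A \<le> degree p"
proof -
  have "card A \<le> card {x. poly p x = 0}"
    using assms by (intro card_mono poly_roots_finite) auto
  also have "\<dots> \<le> degree p"
    using assms(1) by (rule card_poly_roots_bound)
  finally show ?thesis .
qed

lemma finite_card_pow_eq_poly:
  fixes q :: "'a::idom poly"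
  assumes "degree q < N"
  shows "finite {x. x ^ N = poly q x} \<and> card {x. x ^ N = poly q x} \<le> N"
proof -
  let ?p = "monom 1 N + - q"
  have "degree ?p = N"
    using assms degree_add_eq_left[of "- q" "monom 1 N"] by (simp add: degree_monom_eq)
  moreover have "?p \<noteq> 0"
    using assms calculation by auto
  moreover have "{x. x ^ N = poly q x} = {x. poly ?p x = 0}"
    by (simp add: poly_monom)
  ultimately show ?thesis
    using poly_roots_finite card_poly_roots_bound by metis
qed

lemma finite_card_pow_eq_const:
  "0 < N \<Longrightarrow> finite {x::'a::idom. x ^ N = c} \<and> card {x::'a. x ^ N = c} \<le> N"
  using finite_card_pow_eq_poly[of "[:c:]" N] by simp

lemma finite_card_pow_eq_self:
  "1 < N \<Longrightarrow> finite {x::'a::idom. x ^ N = x} \<and> card {x::'a. x ^ N = x} \<le> N"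
  using finite_card_pow_eq_poly[of "[:0, 1:]" N] by simp

lemma card_degree_less:
  assumes "0 < m"
  shows "card {p::'a::{finite,zero} poly. degree p < m} = CARD('a) ^ m"
proof -
  let ?coeffs = "\<lambda>p::'a poly. map (coeff p) [0..<m]"
  have Poly_coeffs: "Poly (?coeffs p) = p" if "degree p < m" for p
    by (rule poly_eqI) (use that in \<open>simp add: nth_default_def coeff_eq_0\<close>)
  have coeffs_Poly: "?coeffs (Poly xs) = xs" if "length xs = m" for xs
    by (rule nth_equalityI) (simp_all add: that nth_default_def)
  have degree_Poly: "degree (Poly xs) < m" if "length xs = m" for xs :: "'a list"
  proof -
    have "degree (Poly xs) \<le> m - 1"
      using that by (intro degree_le) (auto simp: nth_default_def)
    then show ?thesis
      using assms by linarith
  qed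
  have "bij_betw ?coeffs {p. degree p < m} {xs. set xs \<subseteq> UNIV \<and> length xs = m}"
    by (rule bij_betw_byWitness[where f' = Poly])
      (use Poly_coeffs coeffs_Poly degree_Poly in auto)
  then show ?thesis
    using card_lists_length_eq[of "UNIV :: 'a set" m] by (simp add: bij_betw_same_card)
qed

lemma finite_degree_less: "finite {p::'a::{finite,zero} poly. degree p < m}"
proof (cases "m = 0")
  case False
  then show ?thesis
    using card_degree_less[of m, where 'a = 'a] by (intro card_ge_0_finite) simp
qed simp

lemma sum_lessThan_add: "(\<Sum>k<(m::nat) + n. f k) = (\<Sum>k<m. f k) + (\<Sum>k<n. f (m + k))"
  by (induction n) (simp_all add: add.assoc)

lemma poly_eq_sum_lessThan:
  fixes p :: "'a::comm_semiring_1 poly"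
  assumes "degree p < N"
  shows "poly p x = (\<Sum>i<N. coeff p i * x ^ i)"
  unfolding poly_altdef using assms
  by (intro sum.mono_neutral_left) (auto simp: coeff_eq_0)

lemma prod_linear_factors_dvd:
  fixes p :: "'a::idom poly"
  assumes "finite S" and "\<And>s. s \<in> S \<Longrightarrow> poly p s = 0"
  shows "(\<Prod>s\<in>S. [:-s, 1:]) dvd p"
  using assms
proof (induction S arbitrary: p rule: finite_induct)
  case (insert a S)
  obtain q where p: "p = [:-a, 1:] * q"
    using insert.prems poly_eq_0_iff_dvd by blast
  have "(\<Prod>s\<in>S. [:-s, 1:]) dvd q"
    using insert.hyps insert.prems by (intro insert.IH) (force simp: p)
  then have "[:-a, 1:] * (\<Prod>s\<in>S. [:-s, 1:]) dvd p"
    unfolding p by (rule mult_dvd_mono[OF dvd_refl])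
  then show ?case
    by (simp only: prod.insert[OF insert.hyps])
qed simp

lemma dvd_if_vanishes_on_roots:
  fixes p q :: "'a::field poly"
  assumes "p \<noteq> 0" "finite R" "card R = degree p"
    and "\<And>s. s \<in> R \<Longrightarrow> poly p s = 0" "\<And>s. s \<in> R \<Longrightarrow> poly q s = 0"
  shows "p dvd q"
proof -
  let ?L = "\<Prod>s\<in>R. [:-s, 1:]"
  obtain c where p: "p = ?L * c"
    using prod_linear_factors_dvd[OF assms(2,4)] by blast
  have "?L \<noteq> 0" "c \<noteq> 0"
    using assms(1) p by auto
  moreover have "degree ?L = card R"
    by (simp add: degree_prod_eq_sum_degree)
  ultimately have "degree c = 0"
    using assms(3) p degree_mult_eq by fastforce
  then obtain c0 where "c = [:c0:]" "c0 \<noteq> 0"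
    using \<open>c \<noteq> 0\<close> by (metis degree_eq_zeroE pCons_eq_0_iff)
  then have "p = smult c0 ?L"
    using p by simp
  then show ?thesis
    using prod_linear_factors_dvd[OF assms(2,5)] \<open>c0 \<noteq> 0\<close> by (simp add: smult_dvd_iff)
qed


section \<open>Linear codes\<close>

lemma vector_space_smult: "vector_space (smult :: 'a::field \<Rightarrow> 'a poly \<Rightarrow> 'a poly)"
  by unfold_locales (simp_all add: smult_add_right smult_add_left)

lemma dim_multiples_degree_less:
  fixes h :: "'a::field poly"
  assumes "h \<noteq> 0"
  shows "code_dim {r * h | r. degree r < m} = m"
proof -
  interpret vs: vector_space "smult :: 'a \<Rightarrow> 'a poly \<Rightarrow> 'a poly"
    by (rule vector_space_smult)
  define b where "b i = monom 1 i * h" for i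
  have combination: "(\<Sum>i\<in>I. smult (c i) (b i)) = (\<Sum>i\<in>I. monom (c i) i) * h" for I c
    unfolding b_def sum_distrib_right by (simp add: smult_monom flip: mult_smult_left)
  have inj: "inj_on b {..<m}"
    using assms by (auto simp: b_def inj_on_def monom_eq_iff')
  have "b ` {..<m} \<subseteq> {r * h | r. degree r < m}"
    by (auto simp: b_def degree_monom_eq)
  moreover have "{r * h | r. degree r < m} \<subseteq> vs.span (b ` {..<m})"
  proof clarify
    fix r :: "'a poly"
    assume "degree r < m"
    then have "(\<Sum>i<m. monom (coeff r i) i) = r"
      by (intro poly_eqI) (simp add: coeff_sum coeff_monom coeff_eq_0)
    then have "r * h = (\<Sum>i<m. smult (coeff r i) (b i))"
      unfolding combination by simp
    also have "\<dots> \<in> vs.span (b ` {..<m})"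
      by (intro vs.span_sum vs.span_scale vs.span_base) blast
    finally show "r * h \<in> vs.span (b ` {..<m})" .
  qed
  moreover have "vs.independent (b ` {..<m})"
  proof (rule vs.independent_if_scalars_zero)
    fix f x
    assume zero: "(\<Sum>x\<in>b ` {..<m}. smult (f x) x) = 0" and "x \<in> b ` {..<m}"
    then obtain i where i: "i < m" "x = b i"
      by blast
    have "(\<Sum>j<m. monom (f (b j)) j) * h = 0"
      using zero by (simp add: sum.reindex[OF inj] combination)
    then have "coeff (\<Sum>j<m. monom (f (b j)) j) i = 0"
      using assms by simp
    then show "f x = 0"
      using i by (simp add: coeff_sum)
  qed simp
  ultimately show ?thesis
    using vs.dim_unique card_image[OF inj] by simp
qed

lemma degree_negacyc_mod: "0 < n \<Longrightarrow> degree (negacyc_mod n :: 'a::comm_ring_1 poly) = n"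
  unfolding negacyc_mod_def
  by (subst degree_add_eq_left) (simp_all add: degree_monom_eq)

lemma mod_multiples_eq_multiples:
  fixes g h :: "'a::field poly"
  assumes "g * h = X" "X \<noteq> 0" "0 < degree h"
  shows "{(a * g) mod X | a. True} = {r * g | r. degree r < degree h}"
proof -
  have "g \<noteq> 0" "h \<noteq> 0"
    using assms(1,2) by auto
  have small: "degree (r * g) < degree X \<longleftrightarrow> degree r < degree h" if "r \<noteq> 0" for r
    using degree_mult_eq[OF that \<open>g \<noteq> 0\<close>] degree_mult_eq[OF \<open>g \<noteq> 0\<close> \<open>h \<noteq> 0\<close>]
    unfolding assms(1) by linarith
  have "degree h \<le> degree X"
    using degree_mult_eq[OF \<open>g \<noteq> 0\<close> \<open>h \<noteq> 0\<close>] unfolding assms(1) by simp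
  show ?thesis
  proof (rule equalityI; rule subsetI)
    fix c
    assume "c \<in> {(a * g) mod X | a. True}"
    then obtain a where c: "c = (a * g) mod X"
      by blast
    define r where "r = a - ((a * g) div X) * h"
    have "c = a * g - (a * g) div X * X"
      unfolding c by (simp add: minus_div_mult_eq_mod)
    also have "\<dots> = r * g"
      unfolding r_def assms(1)[symmetric] by (simp add: algebra_simps)
    finally have "c = r * g" .
    moreover have "degree r < degree h"
    proof (cases "r = 0")
      case False
      then have "c \<noteq> 0"
        using \<open>c = r * g\<close> \<open>g \<noteq> 0\<close> by simp
      then show ?thesis
        using small[OF False] degree_mod_less'[OF assms(2)] c \<open>c = r * g\<close> by simp
    qed (use assms(3) in simp)
    ultimately show "c \<in> {r * g | r. degree r < degree h}"
      by blast
  next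
    fix c
    assume "c \<in> {r * g | r. degree r < degree h}"
    then obtain r where c: "c = r * g" "degree r < degree h"
      by blast
    then have "degree c < degree X"
      using small assms(3) \<open>degree h \<le> degree X\<close> by (cases "r = 0") simp_all
    then have "(r * g) mod X = c"
      using c(1) by (simp add: mod_poly_less)
    then show "c \<in> {(a * g) mod X | a. True}"
      by blast
  qed
qed

lemma negacyclic_code_check_eq_multiples:
  fixes h :: "'a::field poly"
  assumes "0 < n" and "h dvd negacyc_mod n" and "0 < degree h"
  shows "negacyclic_code_check n h = {r * (negacyc_mod n div h) | r. degree r < degree h}"
proof -
  have "negacyc_mod n \<noteq> (0 :: 'a poly)"
    using degree_negacyc_mod[OF assms(1), where 'a = 'a] assms(1) by auto
  then show ?thesis
    unfolding negacyclic_code_check_def using assms(2,3)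
    by (intro mod_multiples_eq_multiples) simp_all
qed

definition weight :: "nat \<Rightarrow> 'a::zero poly \<Rightarrow> nat" where
  "weight n c = card {i. i < n \<and> coeff c i \<noteq> 0}"

lemma weight_pos:
  assumes "c \<noteq> 0" "degree c < n"
  shows "0 < weight n c"
proof -
  have "degree c \<in> {i. i < n \<and> coeff c i \<noteq> 0}"
    using assms by simp
  then show ?thesis
    unfolding weight_def by (intro card_gt_0_iff[THEN iffD2]) auto
qed

lemma hamming_dist_le: "hamming_dist n c c' \<le> n"
proof -
  have "hamming_dist n c c' \<le> card {..<n}"
    unfolding hamming_dist_def by (intro card_mono) auto
  then show ?thesis
    by simp
qed

lemma hamming_dist_eq_weight:
  fixes c c' :: "'a::ab_group_add poly"
  shows "hamming_dist n c c' = weight n (c - c')"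
  unfolding hamming_dist_def weight_def by simp

lemma finite_hamming_dists: "finite {hamming_dist n c c' | c c'. c \<in> C \<and> c' \<in> C \<and> c \<noteq> c'}"
proof (rule finite_subset)
  show "{hamming_dist n c c' | c c'. c \<in> C \<and> c' \<in> C \<and> c \<noteq> c'} \<subseteq> {..n}"
    using hamming_dist_le by blast
qed simp

lemma min_distance_ge:
  fixes C :: "'a::ab_group_add poly set"
  assumes "0 \<in> C" "c \<in> C" "c \<noteq> 0"
    and diff: "\<And>c c'. c \<in> C \<Longrightarrow> c' \<in> C \<Longrightarrow> c - c' \<in> C"
    and weight: "\<And>c. c \<in> C \<Longrightarrow> c \<noteq> 0 \<Longrightarrow> b \<le> weight n c"
  shows "b \<le> min_distance n C"
proof -
  let ?D = "{hamming_dist n c c' | c c'. c \<in> C \<and> c' \<in> C \<and> c \<noteq> c'}"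
  have "?D \<noteq> {}"
    using assms(1-3) by blast
  moreover have "b \<le> d" if d: "d \<in> ?D" for d
  proof -
    obtain c c' where "d = hamming_dist n c c'" "c \<in> C" "c' \<in> C" "c \<noteq> c'"
      using d by blast
    then show ?thesis
      unfolding hamming_dist_eq_weight using diff weight by simp
  qed
  ultimately show ?thesis
    unfolding min_distance_def by (intro Min.boundedI finite_hamming_dists)
qed

lemma min_distance_le_weight:
  fixes C :: "'a::ab_group_add poly set"
  assumes "0 \<in> C" "c \<in> C" "c \<noteq> 0"
  shows "min_distance n C \<le> weight n c"
proof -
  have "hamming_dist n c 0 \<in> {hamming_dist n c c' | c c'. c \<in> C \<and> c' \<in> C \<and> c \<noteq> c'}"
    using assms by blast
  then have "min_distance n C \<le> hamming_dist n c 0"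
    unfolding min_distance_def using finite_hamming_dists by (rule Min_le[rotated])
  then show ?thesis
    by (simp add: hamming_dist_eq_weight)
qed


lemma field_hom_gf_emb:
  assumes "CARD('p::prime_card) = CHAR('k::field)"
  shows "field_hom (gf_emb :: 'p mod_ring \<Rightarrow> 'k)"
proof -
  have of_int_mod: "(of_int (x mod int CARD('p)) :: 'k) = of_int x" for x
    unfolding assms by (rule of_int_mod_CHAR)
  have "gf_emb (a + b) = (gf_emb a + gf_emb b :: 'k)" for a b :: "'p mod_ring"
    unfolding gf_emb_def to_int_mod_ring_add of_int_mod by simp
  moreover have "gf_emb (a * b) = (gf_emb a * gf_emb b :: 'k)" for a b :: "'p mod_ring"
    unfolding gf_emb_def to_int_mod_ring_mult of_int_mod by simp
  ultimately show ?thesis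
    by unfold_locales (simp_all add: gf_emb_def)
qed

lemma gf_emb_pow_card:
  assumes "CARD('p::prime_card) = CHAR('k::field)"
  shows "(gf_emb a :: 'k) ^ CARD('p) = gf_emb (a :: 'p mod_ring)"
proof -
  interpret field_hom "gf_emb :: 'p mod_ring \<Rightarrow> 'k"
    using assms by (rule field_hom_gf_emb)
  show ?thesis
    using finite_field_power_card_eq_same[of a] by (simp flip: hom_power)
qed

lemma range_gf_emb:
  assumes "CARD('p::prime_card) = CHAR('k::field)"
  shows "range (gf_emb :: 'p mod_ring \<Rightarrow> 'k) = {w. w ^ CARD('p) = w}"
proof -
  interpret field_hom "gf_emb :: 'p mod_ring \<Rightarrow> 'k"
    using assms by (rule field_hom_gf_emb)
  have "1 < CARD('p)"
    using prime_card prime_gt_1_nat by blast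
  then have roots: "finite {w::'k. w ^ CARD('p) = w}" "card {w::'k. w ^ CARD('p) = w} \<le> CARD('p)"
    using finite_card_pow_eq_self by blast+
  have "range (gf_emb :: 'p mod_ring \<Rightarrow> 'k) \<subseteq> {w. w ^ CARD('p) = w}"
    using gf_emb_pow_card[OF assms] by auto
  moreover have "inj (gf_emb :: 'p mod_ring \<Rightarrow> 'k)"
    using injectivity by (auto intro: injI)
  then have "card (range (gf_emb :: 'p mod_ring \<Rightarrow> 'k)) = CARD('p)"
    by (simp add: card_image)
  ultimately show ?thesis
    using roots by (metis card_mono card_subset_eq le_antisym)
qed

lemma pow_plus_one_not_dvd_pow_minus_one:
  fixes b :: nat
  assumes "1 < b" "0 < m" "m < 2 * l"
  shows "\<not> b ^ l + 1 dvd b ^ m - 1"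
proof
  assume dvd: "b ^ l + 1 dvd b ^ m - 1"
  have "1 < b ^ m"
    using one_less_power[OF assms(1,2)] .
  show False
  proof (cases "m \<le> l")
    case True
    then have "b ^ m - 1 < b ^ l + 1"
      using power_increasing[OF True, of b] assms(1) by linarith
    then show False
      using dvd \<open>1 < b ^ m\<close> by (simp add: nat_dvd_not_less)
  next
    case False
    define r where "r = m - l"
    have r: "m = l + r" "r < l"
      using False assms(3) by (auto simp: r_def)
    have "b ^ m - 1 + (b ^ r + 1) = b ^ r * (b ^ l + 1)"
      using \<open>1 < b ^ m\<close> by (simp add: r(1) power_add algebra_simps)
    then have "b ^ l + 1 dvd b ^ r + 1"
      using dvd by (metis dvd_add_right_iff dvd_triv_right)
    moreover have "b ^ r + 1 < b ^ l + 1"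
      using power_strict_increasing[OF r(2) assms(1)] by simp
    ultimately show False
      by (simp add: nat_dvd_not_less)
  qed
qed

lemma eq_or_eq_minus_if_signs:
  fixes x y s t :: "'a::comm_ring_1"
  assumes "s = 1 \<or> s = - 1" "t = 1 \<or> t = - 1" "s * x = t * y \<or> s * x = - (t * y)"
  shows "x = y \<or> x = - y"
  using assms by (elim disjE; simp; metis minus_minus)

section \<open>Reciprocal sums in characteristic 3\<close>

lemma sum3_and_inverse_sum_zero_imp_eq:
  fixes a b c :: "'k::field"
  assumes "(3::'k) = 0" and "a \<noteq> 0" "b \<noteq> 0" "c \<noteq> 0"
    and "a + b + c = 0" and "inverse a + inverse b + inverse c = 0"
  shows "a = b"
proof -
  have "a * b + b * c + c * a = a * b * c * (inverse a + inverse b + inverse c)"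
    using assms(2-4) by (simp add: field_simps)
  also have "\<dots> = 0"
    using assms(6) by simp
  finally have "a * b + b * c + c * a = 0" .
  moreover have c: "c = - a - b"
    using assms(5) by (simp add: algebra_simps eq_neg_iff_add_eq_0)
  have "(a - b) ^ 2 + (a * b + b * c + c * a) = - (3 * a * b)"
    unfolding c by (simp add: power2_eq_square algebra_simps)
  ultimately show ?thesis
    using assms(1) by simp
qed

lemma sum4_and_inverse_sum_zero_imp_opposite:
  fixes a b c d :: "'k::field"
  assumes "a \<noteq> 0" "b \<noteq> 0" "c \<noteq> 0" "d \<noteq> 0"
    and "a + b + c + d = 0" and "inverse a + inverse b + inverse c + inverse d = 0"
  shows "a + b = 0 \<or> b + c = 0 \<or> c + a = 0"
proof -
  have "a*b*c + a*b*d + a*c*d + b*c*d = a*b*c*d * (inverse a + inverse b + inverse c + inverse d)"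
    using assms(1-4) by (simp add: field_simps)
  also have "\<dots> = 0"
    using assms(6) by simp
  finally have "a*b*c + a*b*d + a*c*d + b*c*d = 0" .
  moreover have d: "d = - a - b - c"
    using assms(5) by (simp add: algebra_simps eq_neg_iff_add_eq_0)
  have "a*b*c + a*b*d + a*c*d + b*c*d = - ((a + b) * (b + c) * (c + a))"
    unfolding d by (simp add: algebra_simps)
  ultimately show ?thesis
    by simp
qed

lemma inverse_sum_nonzero_if_small_zero_sum:
  fixes W :: "'k::field set"
  assumes "(3::'k) = 0" and "finite W" "W \<noteq> {}" "card W \<le> 4"
    and "0 \<notin> W" and no_opposite: "\<And>w. w \<in> W \<Longrightarrow> - w \<notin> W"
    and "(\<Sum>w\<in>W. w) = 0"
  shows "(\<Sum>w\<in>W. inverse w) \<noteq> 0"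
proof
  assume inverse_sum: "(\<Sum>w\<in>W. inverse w) = 0"
  have opposite: "x + y \<noteq> 0" if "x \<in> W" "y \<in> W" for x y
    using no_opposite that by (metis add_eq_0_iff2)
  have "card W \<noteq> 0"
    using assms(2,3) by simp
  then consider "card W = 1" | "card W = 2" | "card W = 3" | "card W = 4"
    using assms(4) by linarith
  then show False
  proof cases
    case 1
    then obtain a where "W = {a}"
      by (rule card_1_singletonE)
    then show False
      using assms(5,7) by simp
  next
    case 2
    then obtain a b where "W = {a, b}" "a \<noteq> b"
      by (auto simp: card_2_iff)
    then show False
      using assms(7) opposite by simp
  next
    case 3
    then obtain a b c where W: "W = {a, b, c}" "a \<noteq> b" "b \<noteq> c" "a \<noteq> c"
      by (auto simp: card_3_iff)
    then have "a = b"
      using assms(1,5,7) inverse_sum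
      by (intro sum3_and_inverse_sum_zero_imp_eq[of a b c]) (auto simp: add.assoc)
    then show False
      using W(2) by simp
  next
    case 4
    then obtain a b c d where W: "W = {a, b, c, d}" and distinct: "distinct [a, b, c, d]"
      by (auto simp: card_Suc_eq numeral_eq_Suc)
    have "a + b = 0 \<or> b + c = 0 \<or> c + a = 0"
      using assms(5,7) inverse_sum distinct
      by (intro sum4_and_inverse_sum_zero_imp_opposite) (auto simp: W add.assoc)
    then show False
      using opposite W by auto
  qed
qed


section \<open>The ternary negacyclic code\<close>

locale ternary_negacyclic =
  fixes l n :: nat and \<beta> :: "'k::field" and M :: "'p::prime_card mod_ring poly"
  assumes card_p: "CARD('p) = 3" and char_k: "CHAR('k) = 3" and l_ge_2: "2 \<le> l"
    and n_def: "n = (3 ^ l + 1) div 2"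
    and primitive: "primitive_root_of_unity (2 * n) \<beta>"
    and min_poly: "is_min_poly \<beta> M"
begin

abbreviation emb :: "'p mod_ring \<Rightarrow> 'k" where "emb \<equiv> gf_emb"

sublocale emb: field_hom emb
  by (rule field_hom_gf_emb) (simp add: card_p char_k)

sublocale emb_poly: map_poly_inj_idom_hom emb ..

abbreviation ev :: "'p mod_ring poly \<Rightarrow> 'k" where
  "ev p \<equiv> poly (map_poly emb p) \<beta>"

lemma three_eq_0: "(3::'k) = 0"
  using of_nat_CHAR[where 'a = 'k] by (simp add: char_k)

lemma two_eq_minus_1: "(2::'k) = - 1"
  using three_eq_0 by (simp add: eq_neg_iff_add_eq_0)

lemma two_neq_0: "(2::'k) \<noteq> 0"
  using two_eq_minus_1 by (metis neg_equal_0_iff_equal zero_neq_one)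

lemma one_neq_minus_1: "(1::'k) \<noteq> - 1"
  using two_neq_0 by (metis one_add_one add_eq_0_iff2)

lemma power_three_pow_add: "(a + b) ^ 3 ^ m = a ^ 3 ^ m + (b ^ 3 ^ m :: 'k)"
  by (rule freshmans_dream') (simp_all add: char_k)

lemma power_three_pow_sum: "(\<Sum>i\<in>A. f i) ^ 3 ^ m = (\<Sum>i\<in>A. f i ^ 3 ^ m :: 'k)"
  by (rule freshmans_dream_sum') (simp_all add: char_k)

lemma power_three_pow_minus: "(- a) ^ 3 ^ m = - (a ^ 3 ^ m :: 'k)"
  by (simp add: power_minus_odd)

lemma power_three_pow_diff: "(a - b) ^ 3 ^ m = a ^ 3 ^ m - (b ^ 3 ^ m :: 'k)"
  using power_three_pow_add[of a "- b" m] by (simp add: power_three_pow_minus)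

lemma two_n: "2 * n = 3 ^ l + 1"
  unfolding n_def by simp

lemma nine_le_three_pow: "9 \<le> (3::nat) ^ l"
  using power_increasing[OF l_ge_2, of "3::nat"] by simp

lemma four_l_less_three_pow: "4 * l < (3::nat) ^ l"
  using l_ge_2
proof (induction l rule: dec_induct)
  case (step m)
  then show ?case by simp
qed simp

lemma two_l_less_n: "2 * l < n"
  using four_l_less_three_pow two_n by linarith

lemma n_pos: "0 < n"
  using two_l_less_n by simp

lemma beta_pow_eq_1_iff: "\<beta> ^ i = 1 \<longleftrightarrow> 2 * n dvd i"
proof
  assume "\<beta> ^ i = 1"
  have "\<beta> ^ i = (\<beta> ^ (2 * n)) ^ (i div (2 * n)) * \<beta> ^ (i mod (2 * n))"
    by (simp flip: power_mult power_add)
  then have "\<beta> ^ (i mod (2 * n)) = 1"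
    using \<open>\<beta> ^ i = 1\<close> primitive by (simp add: primitive_root_of_unity_def)
  moreover have "i mod (2 * n) < 2 * n"
    using n_pos by simp
  ultimately show "2 * n dvd i"
    using primitive unfolding primitive_root_of_unity_def by (meson dvd_eq_mod_eq_0 neq0_conv)
next
  assume "2 * n dvd i"
  then show "\<beta> ^ i = 1"
    using primitive by (auto simp: primitive_root_of_unity_def power_mult)
qed

lemma beta_neq_0: "\<beta> \<noteq> 0"
proof
  assume "\<beta> = 0"
  moreover have "\<beta> ^ (2 * n) = 1"
    using beta_pow_eq_1_iff by simp
  ultimately show False
    using n_pos by (simp add: power_0_left)
qed

lemma beta_pow_eq_iff: "\<beta> ^ i = \<beta> ^ j \<longleftrightarrow> i mod (2 * n) = j mod (2 * n)"
proof -
  have *: "\<beta> ^ i = \<beta> ^ j \<longleftrightarrow> i mod (2 * n) = j mod (2 * n)" if "j \<le> i" for i j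
  proof -
    have "\<beta> ^ i = \<beta> ^ j * \<beta> ^ (i - j)"
      using that by (simp flip: power_add)
    then have "\<beta> ^ i = \<beta> ^ j \<longleftrightarrow> \<beta> ^ (i - j) = 1"
      using beta_neq_0 by auto
    also have "\<dots> \<longleftrightarrow> i mod (2 * n) = j mod (2 * n)"
      using that by (simp add: beta_pow_eq_1_iff mod_eq_dvd_iff_nat)
    finally show ?thesis .
  qed
  show ?thesis
    using *[of j i] *[of i j] by (cases "j \<le> i") auto
qed

lemma beta_pow_n: "\<beta> ^ n = - 1"
proof -
  have "(\<beta> ^ n) ^ 2 = 1"
    using beta_pow_eq_1_iff[of "n * 2"] by (simp flip: power_mult)
  moreover have "\<beta> ^ n \<noteq> 1"
    using beta_pow_eq_1_iff[of n] n_pos by auto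
  ultimately show ?thesis
    by (simp add: power2_eq_1_iff)
qed

lemma beta_pow_plus_n: "\<beta> ^ (i + n) = - (\<beta> ^ i)"
  by (simp add: power_add beta_pow_n)

text \<open>The elements of norm \<open>x\<^bsup>3^l+1\<^esup> = 1\<close> in the field with \<open>3\<^bsup>2l\<^esup>\<close> elements.\<close>
definition circle :: "'k set" where
  "circle = {x. x ^ (2 * n) = 1}"

lemma circle_iff: "x \<in> circle \<longleftrightarrow> x * x ^ 3 ^ l = 1"
  by (simp add: circle_def two_n power_add)

lemma beta_pow_in_circle: "\<beta> ^ i \<in> circle"
  by (simp add: circle_def beta_pow_eq_1_iff flip: power_mult)

lemma circle_eq: "circle = (\<lambda>i. \<beta> ^ i) ` {..<2 * n}"
proof -
  have fin: "finite circle" and card: "card circle \<le> 2 * n"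
    unfolding circle_def
    using finite_card_pow_eq_const[of "2 * n" "1 :: 'k"] n_pos by simp_all
  have sub: "(\<lambda>i. \<beta> ^ i) ` {..<2 * n} \<subseteq> circle"
    using beta_pow_in_circle by blast
  have "inj_on (\<lambda>i. \<beta> ^ i) {..<2 * n}"
    by (simp add: inj_on_def beta_pow_eq_iff)
  then have "card ((\<lambda>i. \<beta> ^ i) ` {..<2 * n}) = 2 * n"
    by (simp add: card_image)
  then have "card ((\<lambda>i. \<beta> ^ i) ` {..<2 * n}) = card circle"
    using card card_mono[OF fin sub] by linarith
  then show ?thesis
    using card_subset_eq[OF fin sub] by simp
qed

lemma circle_neq_0: "x \<in> circle \<Longrightarrow> x \<noteq> 0"
  unfolding circle_iff by auto

lemma circle_pow_three_pow: "x \<in> circle \<Longrightarrow> x ^ 3 ^ l = inverse x"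
  unfolding circle_iff by (metis inverse_unique)

lemma minus_one_in_circle: "- 1 \<in> circle"
  using beta_pow_in_circle[of n] by (simp add: beta_pow_n)

lemma circle_mult: "x \<in> circle \<Longrightarrow> y \<in> circle \<Longrightarrow> x * y \<in> circle"
  unfolding circle_def by (simp add: power_mult_distrib)

lemma circle_inverse: "x \<in> circle \<Longrightarrow> inverse x \<in> circle"
  unfolding circle_def by (simp add: power_inverse)

lemma beta_pow_three_pow_l: "\<beta> ^ 3 ^ l = inverse \<beta>"
  using circle_pow_three_pow[OF beta_pow_in_circle[of 1]] by simp

lemma beta_pow_three_pow_2l: "\<beta> ^ 3 ^ (2 * l) = \<beta>"
proof -
  have "\<beta> ^ 3 ^ (2 * l) = (\<beta> ^ 3 ^ l) ^ 3 ^ l"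
    by (simp add: power_mult[symmetric] power_add[symmetric] mult_2)
  then show ?thesis
    by (simp add: beta_pow_three_pow_l power_inverse)
qed

lemma coprime_two_n_three: "coprime (2 * n) 3"
proof -
  have "3 dvd (3::nat) ^ l"
    using l_ge_2 by (simp add: dvd_power)
  then have "3 dvd (3::nat) ^ l + 1 \<longleftrightarrow> 3 dvd (1::nat)"
    by (rule dvd_add_right_iff)
  then have "\<not> 3 dvd (3::nat) ^ l + 1"
    by simp
  then have "coprime 3 ((3::nat) ^ l + 1)"
    by (intro prime_imp_coprime) simp_all
  then show ?thesis
    unfolding two_n by (simp add: coprime_commute)
qed

text \<open>The Frobenius conjugates of \<open>\<beta>\<close> are distinct since \<open>3\<close> has order \<open>2l\<close> modulo \<open>3^l + 1\<close>.\<close>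
lemma inj_on_beta_pow_three_pow: "inj_on (\<lambda>j. \<beta> ^ 3 ^ j) {..<2 * l}"
proof -
  have "\<beta> ^ 3 ^ i \<noteq> \<beta> ^ 3 ^ j" if "i < j" "j < 2 * l" for i j
  proof
    assume "\<beta> ^ 3 ^ i = \<beta> ^ 3 ^ j"
    moreover have "(3::nat) ^ j = 3 ^ i * 3 ^ (j - i)"
      using that by (simp flip: power_add)
    ultimately have "\<beta> ^ (3 ^ i * 3 ^ (j - i)) = \<beta> ^ 3 ^ i"
      by simp
    then have "(3 ^ i * 3 ^ (j - i)) mod (2 * n) = 3 ^ i mod (2 * n)"
      by (simp only: beta_pow_eq_iff)
    then have "2 * n dvd 3 ^ i * 3 ^ (j - i) - 3 ^ i"
      by (simp add: mod_eq_dvd_iff_nat)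
    then have "2 * n dvd 3 ^ i * (3 ^ (j - i) - 1)"
      by (simp add: diff_mult_distrib2)
    moreover have "coprime (2 * n) (3 ^ i)"
      using coprime_two_n_three by simp
    ultimately have "3 ^ l + 1 dvd (3::nat) ^ (j - i) - 1"
      by (simp add: coprime_dvd_mult_right_iff two_n)
    then show False
      using pow_plus_one_not_dvd_pow_minus_one[of 3 "j - i" l] that by (simp add: less_imp_diff_less)
  qed
  then show ?thesis
    unfolding inj_on_def by (metis lessThan_iff nat_neq_iff)
qed

lemma emb_pow_three_pow: "emb a ^ 3 ^ m = emb a"
proof (induction m)
  case (Suc m)
  have "emb a ^ 3 ^ Suc m = (emb a ^ 3 ^ m) ^ 3"
    by (simp only: power_Suc2 power_mult)
  also have "\<dots> = emb a"
    using Suc gf_emb_pow_card[of a, where 'k = 'k] by (simp add: card_p char_k)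
  finally show ?case .
qed simp

lemma range_emb: "range emb = {w. w ^ 3 = w}"
  using range_gf_emb[where 'p = 'p and 'k = 'k] by (simp add: card_p char_k)

lemma emb_eq_1_or_minus_1: "c \<noteq> 0 \<Longrightarrow> emb c = 1 \<or> emb c = - 1"
proof -
  assume "c \<noteq> 0"
  have "emb c * (emb c - 1) * (emb c + 1) = emb c ^ 3 - emb c"
    by (simp add: algebra_simps power3_eq_cube)
  also have "\<dots> = 0"
    using emb_pow_three_pow[of c 1] by simp
  finally show ?thesis
    using \<open>c \<noteq> 0\<close> by (simp add: eq_neg_iff_add_eq_0)
qed

lemma poly_emb_pow_three_pow:
  "poly (map_poly emb p) z ^ 3 ^ m = poly (map_poly emb p) (z ^ 3 ^ m)"
proof -
  have "poly (map_poly emb p) z ^ 3 ^ m = (\<Sum>i\<le>degree p. (emb (coeff p i) * z ^ i) ^ 3 ^ m)"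
    by (simp add: poly_altdef power_three_pow_sum)
  also have "\<dots> = poly (map_poly emb p) (z ^ 3 ^ m)"
    by (simp add: poly_altdef power_mult_distrib emb_pow_three_pow flip: power_mult)
      (simp add: mult.commute)
  finally show ?thesis .
qed

lemma monic_M: "monic M" and ev_M: "ev M = 0"
  and degree_M_le: "q \<noteq> 0 \<Longrightarrow> ev q = 0 \<Longrightarrow> degree M \<le> degree q"
  using min_poly unfolding is_min_poly_def by blast+

lemma M_neq_0: "M \<noteq> 0"
  using monic_M by auto

lemma M_dvd_iff: "M dvd p \<longleftrightarrow> ev p = 0"
proof
  assume "ev p = 0"
  define q r where "q = p div M" and "r = p mod M"
  have "p = q * M + r"
    by (simp add: q_def r_def)
  then have "ev p = ev q * ev M + ev r"
    by (simp only: emb_poly.hom_add emb_poly.hom_mult poly_add poly_mult)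
  then have "ev r = 0"
    using \<open>ev p = 0\<close> ev_M by simp
  have "r = 0"
  proof (rule ccontr)
    assume "r \<noteq> 0"
    then have "degree r < degree M"
      unfolding r_def by (rule degree_mod_less'[OF M_neq_0])
    then show False
      using degree_M_le[OF \<open>r \<noteq> 0\<close> \<open>ev r = 0\<close>] by simp
  qed
  then show "M dvd p"
    by (simp add: r_def mod_eq_0_iff_dvd)
next
  assume "M dvd p"
  then obtain q where "p = M * q"
    by (rule dvdE)
  then show "ev p = 0"
    by (simp add: emb_poly.hom_mult ev_M)
qed

lemma inj_on_ev: "inj_on ev {p. degree p < degree M}"
proof (rule inj_onI)
  fix p q
  assume "p \<in> {p. degree p < degree M}" "q \<in> {p. degree p < degree M}" "ev p = ev q"
  then have "degree (p - q) < degree M" "ev (p - q) = 0"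
    by (simp_all add: degree_diff_less emb_poly.hom_minus)
  then show "p = q"
    using degree_M_le[of "p - q"] by (cases "p - q = 0") simp_all
qed

definition F :: "'k set" where
  "F = {z. z ^ 3 ^ (2 * l) = z}"

lemma finite_F: "finite F" and card_F_le: "card F \<le> 3 ^ (2 * l)"
proof -
  have "1 < (3::nat) ^ (2 * l)"
    using one_less_power[of "3::nat" "2 * l"] l_ge_2 by simp
  then show "finite F" "card F \<le> 3 ^ (2 * l)"
    unfolding F_def using finite_card_pow_eq_self by blast+
qed

lemma ev_in_F: "ev p \<in> F"
  unfolding F_def using poly_emb_pow_three_pow[of p \<beta> "2 * l"]
  by (simp add: beta_pow_three_pow_2l)

lemma F_mult: "a \<in> F \<Longrightarrow> b \<in> F \<Longrightarrow> a * b \<in> F"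
  unfolding F_def by (simp add: power_mult_distrib)

lemma beta_pow_in_F: "\<beta> ^ i \<in> F"
  using ev_in_F[of "monom 1 i"] by (simp add: poly_monom)

lemma two_l_le_degree_M: "2 * l \<le> degree M"
proof -
  have roots: "poly (map_poly emb M) x = 0" if "x \<in> (\<lambda>j. \<beta> ^ 3 ^ j) ` {..<2 * l}" for x
    using that poly_emb_pow_three_pow[of M \<beta>] ev_M by (auto simp: power_0_left)
  have "map_poly emb M \<noteq> 0"
    using M_neq_0 by simp
  then have "card ((\<lambda>j. \<beta> ^ 3 ^ j) ` {..<2 * l}) \<le> degree (map_poly emb M)"
    using roots by (rule card_le_degree_if_roots)
  then show ?thesis
    using card_image[OF inj_on_beta_pow_three_pow] by simp
qed

lemma degree_M: "degree M = 2 * l"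
proof (rule ccontr)
  assume "degree M \<noteq> 2 * l"
  then have "2 * l + 1 \<le> degree M"
    using two_l_le_degree_M by linarith
  then have "{p. degree p < 2 * l + 1} \<subseteq> {p. degree p < degree M}"
    by auto
  then have "inj_on ev {p. degree p < 2 * l + 1}"
    by (rule inj_on_subset[OF inj_on_ev])
  moreover have "ev ` {p. degree p < 2 * l + 1} \<subseteq> F"
    using ev_in_F by blast
  ultimately have "card {p::'p mod_ring poly. degree p < 2 * l + 1} \<le> card F"
    using finite_F by (rule card_inj_on_le)
  also have "\<dots> < 3 ^ (2 * l + 1)"
    using card_F_le by (simp add: le_less_trans)
  also have "\<dots> = card {p::'p mod_ring poly. degree p < 2 * l + 1}"
    using card_degree_less[of "2 * l + 1", where 'a = "'p mod_ring"] by (simp add: card_p)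
  finally show False
    by simp
qed

lemma F_eq_image_ev: "F = ev ` {p. degree p < 2 * l}"
proof -
  have sub: "ev ` {p. degree p < 2 * l} \<subseteq> F"
    using ev_in_F by blast
  have "card (ev ` {p. degree p < 2 * l}) = 3 ^ (2 * l)"
    using inj_on_ev card_degree_less[of "2 * l", where 'a = "'p mod_ring"] l_ge_2
    by (simp add: card_image degree_M card_p)
  then have "card (ev ` {p. degree p < 2 * l}) = card F"
    using card_F_le card_mono[OF finite_F sub] by linarith
  then show ?thesis
    using card_subset_eq[OF finite_F sub] by simp
qed

lemma card_F: "card F = 3 ^ (2 * l)"
  using inj_on_ev card_degree_less[of "2 * l", where 'a = "'p mod_ring"] l_ge_2
  by (simp add: F_eq_image_ev card_image degree_M card_p)

subsection \<open>The trace from \<open>F\<close> to the prime field\<close>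

definition Tr :: "'k \<Rightarrow> 'k" where
  "Tr z = (\<Sum>k<2 * l. z ^ 3 ^ k)"

lemma Tr_add: "Tr (a + b) = Tr a + Tr b"
  unfolding Tr_def by (simp add: power_three_pow_add sum.distrib)

lemma Tr_minus: "Tr (- a) = - Tr a"
  unfolding Tr_def by (simp add: power_three_pow_minus sum_negf)

lemma Tr_diff: "Tr (a - b) = Tr a - Tr b"
  using Tr_add[of a "- b"] by (simp add: Tr_minus)

lemma Tr_0: "Tr 0 = 0"
  unfolding Tr_def by (simp add: power_0_left)

lemma Tr_sum: "Tr (\<Sum>i\<in>A. f i) = (\<Sum>i\<in>A. Tr (f i))"
  by (induction A rule: infinite_finite_induct) (simp_all add: Tr_0 Tr_add)

lemma Tr_emb_mult: "Tr (emb c * z) = emb c * Tr z"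
  unfolding Tr_def by (simp add: power_mult_distrib emb_pow_three_pow sum_distrib_left)

lemma Tr_in_range_emb:
  assumes "z \<in> F"
  shows "Tr z \<in> range emb"
proof -
  let ?f = "\<lambda>k. z ^ 3 ^ k"
  have "Tr z ^ 3 = (\<Sum>k<2 * l. ?f k ^ 3)"
    using power_three_pow_sum[of ?f "{..<2 * l}" 1] by (simp add: Tr_def)
  also have "\<dots> = (\<Sum>k<2 * l. ?f (Suc k))"
    by (simp add: power_mult[symmetric] mult.commute)
  also have "\<dots> = (\<Sum>k<Suc (2 * l). ?f k) - ?f 0"
    by (simp only: sum.lessThan_Suc_shift) simp
  also have "\<dots> = Tr z"
    using assms by (simp add: Tr_def F_def)
  finally show ?thesis
    by (simp add: range_emb)
qed

text \<open>Otherwise the polynomial \<open>\<Sum>\<^sub>k t\<^bsup>3^k\<^esup> X\<^bsup>3^k\<^esup>\<close> of degree \<open>3\<^bsup>2l-1\<^esup>\<close> would vanish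
  on all \<open>3\<^bsup>2l\<^esup>\<close> elements of \<open>F\<close>.\<close>
lemma Tr_nondegenerate:
  assumes "t \<noteq> 0"
  shows "\<exists>s\<in>F. Tr (s * t) \<noteq> 0"
proof (rule ccontr)
  assume "\<not> (\<exists>s\<in>F. Tr (s * t) \<noteq> 0)"
  define R :: "'k poly" where "R = (\<Sum>k<2 * l. monom (t ^ 3 ^ k) (3 ^ k))"
  have "poly R s = Tr (s * t)" for s
    unfolding R_def Tr_def by (simp add: poly_sum poly_monom power_mult_distrib mult.commute)
  then have roots: "poly R s = 0" if "s \<in> F" for s
    using \<open>\<not> (\<exists>s\<in>F. Tr (s * t) \<noteq> 0)\<close> that by simp
  have "coeff R (3 ^ (2 * l - 1)) = (\<Sum>k<2 * l. if k = 2 * l - 1 then t ^ 3 ^ k else 0)"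
    unfolding R_def coeff_sum coeff_monom by (intro sum.cong) auto
  also have "\<dots> = t ^ 3 ^ (2 * l - 1)"
    using l_ge_2 by simp
  finally have "R \<noteq> 0"
    using assms by auto
  have "degree R \<le> 3 ^ (2 * l - 1)"
    unfolding R_def
  proof (rule degree_sum_le)
    fix k
    assume "k \<in> {..<2 * l}"
    then have "(3::nat) ^ k \<le> 3 ^ (2 * l - 1)"
      by (intro power_increasing) auto
    then show "degree (monom (t ^ 3 ^ k) (3 ^ k)) \<le> 3 ^ (2 * l - 1)"
      using degree_monom_le le_trans by blast
  qed simp
  moreover have "card F \<le> degree R"
    using \<open>R \<noteq> 0\<close> roots by (rule card_le_degree_if_roots)
  moreover have "(3::nat) ^ (2 * l - 1) < 3 ^ (2 * l)"
    using l_ge_2 by (intro power_strict_increasing) auto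
  ultimately show False
    using card_F by linarith
qed

abbreviation code :: "'p mod_ring poly set" where
  "code \<equiv> negacyclic_code_check n M"

abbreviation gen :: "'p mod_ring poly" where
  "gen \<equiv> negacyc_mod n div M"

lemma degree_negacyc_mod_n: "degree (negacyc_mod n :: 'p mod_ring poly) = n"
  using degree_negacyc_mod[OF n_pos] .

lemma ev_negacyc_mod: "ev (negacyc_mod n) = 0"
  by (simp add: negacyc_mod_def emb_poly.hom_add poly_monom beta_pow_n)

lemma gen_times_M: "gen * M = negacyc_mod n"
  using ev_negacyc_mod by (simp add: M_dvd_iff)

lemma gen_neq_0: "gen \<noteq> 0"
  using gen_times_M degree_negacyc_mod_n n_pos by auto

lemma code_eq: "code = {r * gen | r. degree r < 2 * l}"
  using negacyclic_code_check_eq_multiples[OF n_pos, of M] ev_negacyc_mod l_ge_2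
  by (simp add: M_dvd_iff degree_M)

lemma dim_code: "code_dim code = 2 * l"
  unfolding code_eq using gen_neq_0 by (rule dim_multiples_degree_less)

lemma finite_code: "finite code" and card_code: "card code = 3 ^ (2 * l)"
proof -
  have "code = (\<lambda>r. r * gen) ` {r. degree r < 2 * l}"
    unfolding code_eq by blast
  moreover have "inj_on (\<lambda>r. r * gen) {r. degree r < 2 * l}"
    using gen_neq_0 by (auto simp: inj_on_def)
  ultimately show "finite code" "card code = 3 ^ (2 * l)"
    using finite_degree_less[where 'a = "'p mod_ring"]
      card_degree_less[of "2 * l", where 'a = "'p mod_ring"] l_ge_2
    by (simp_all add: card_image card_p)
qed

text \<open>The inverse of \<open>emb\<close> is only meaningful for \<open>t \<in> F\<close>, where all the traces
  \<open>Tr (t \<beta>\<^sup>i)\<close> lie in the prime field.\<close>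
definition trace_word :: "'k \<Rightarrow> 'p mod_ring poly" where
  "trace_word t = Poly (map (\<lambda>i. inv_into UNIV emb (Tr (t * \<beta> ^ i))) [0..<n])"

lemma coeff_trace_word:
  "coeff (trace_word t) i = (if i < n then inv_into UNIV emb (Tr (t * \<beta> ^ i)) else 0)"
  unfolding trace_word_def by (simp add: nth_default_def)

lemma degree_trace_word: "degree (trace_word t) < n"
proof -
  have "degree (trace_word t) \<le> n - 1"
    by (intro degree_le) (auto simp: coeff_trace_word)
  then show ?thesis
    using n_pos by linarith
qed

lemma emb_coeff_trace_word:
  "t \<in> F \<Longrightarrow> i < n \<Longrightarrow> emb (coeff (trace_word t) i) = Tr (t * \<beta> ^ i)"
  by (simp add: coeff_trace_word f_inv_into_f Tr_in_range_emb F_mult beta_pow_in_F)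

lemma trace_word_0: "trace_word 0 = 0"
proof -
  have "inv_into UNIV emb 0 = 0"
    using inv_into_f_f[of emb UNIV 0] emb.inj_f by simp
  then show ?thesis
    by (simp add: poly_eq_iff coeff_trace_word Tr_0)
qed

lemma poly_trace_word:
  assumes "t \<in> F"
  shows "poly (map_poly emb (trace_word t)) x = (\<Sum>i<n. Tr (t * \<beta> ^ i) * x ^ i)"
  using poly_eq_sum_lessThan[of "map_poly emb (trace_word t)" n x] degree_trace_word
  by (simp add: emb_coeff_trace_word[OF assms])

lemma poly_trace_word_beta_pow:
  assumes "t \<in> F"
  shows "poly (map_poly emb (trace_word t)) (\<beta> ^ j)
    = (\<Sum>k<2 * l. t ^ 3 ^ k * (\<Sum>i<n. (\<beta> ^ (3 ^ k + j)) ^ i))"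
proof -
  have "Tr (t * \<beta> ^ i) * (\<beta> ^ j) ^ i = (\<Sum>k<2 * l. t ^ 3 ^ k * (\<beta> ^ (3 ^ k + j)) ^ i)" for i
    unfolding Tr_def sum_distrib_right
    by (intro sum.cong) (simp_all add: power_mult_distrib power_add mult_ac flip: power_mult)
  then show ?thesis
    by (simp add: poly_trace_word[OF assms] sum_distrib_left flip: sum.swap[of _ "{..<n}"])
qed

text \<open>Either \<open>\<beta>\<^sup>j\<close> is a conjugate \<open>\<beta>\<^bsup>3^(k+l)\<^esup> = \<beta>\<^bsup>-3^k\<^esup>\<close> of \<open>\<beta>\<close>, hence a root
  of \<open>M\<close>, or all the geometric sums above vanish.\<close>
lemma trace_word_times_M_vanishes:
  assumes "t \<in> F" "odd j"
  shows "poly (map_poly emb (trace_word t * M)) (\<beta> ^ j) = 0"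
proof (cases "\<exists>k<2 * l. \<beta> ^ (3 ^ k + j) = 1")
  case True
  then obtain k where "\<beta> ^ (3 ^ k + j) = 1"
    by blast
  then have "\<beta> ^ j = inverse (\<beta> ^ 3 ^ k)"
    by (simp add: power_add inverse_unique)
  also have "\<dots> = (\<beta> ^ 3 ^ k) ^ 3 ^ l"
    using circle_pow_three_pow[OF beta_pow_in_circle] by simp
  also have "\<dots> = \<beta> ^ 3 ^ (k + l)"
    by (simp add: power_add power_mult)
  finally have "poly (map_poly emb M) (\<beta> ^ j) = 0"
    using poly_emb_pow_three_pow[of M \<beta> "k + l"] ev_M by (simp add: power_0_left)
  then show ?thesis
    by (simp add: emb_poly.hom_mult)
next
  case False
  have "(\<Sum>i<n. (\<beta> ^ (3 ^ k + j)) ^ i) = 0" if "k < 2 * l" for k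
  proof -
    have "even (3 ^ k + j)"
      using assms(2) by simp
    then obtain m where m: "3 ^ k + j = 2 * m"
      by (rule evenE)
    have "(\<beta> ^ (3 ^ k + j)) ^ n = 1"
      unfolding m using beta_pow_eq_1_iff[of "2 * m * n"] by (simp add: power_mult)
    then show ?thesis
      using geometric_sum[of "\<beta> ^ (3 ^ k + j)" n] False that by auto
  qed
  then show ?thesis
    by (simp add: emb_poly.hom_mult poly_trace_word_beta_pow[OF assms(1)])
qed

lemma negacyc_mod_dvd_if_vanishes:
  assumes "\<And>j. odd j \<Longrightarrow> poly q (\<beta> ^ j) = 0"
  shows "map_poly emb (negacyc_mod n) dvd q"
proof (rule dvd_if_vanishes_on_roots)
  let ?R = "(\<lambda>i. \<beta> ^ (2 * i + 1)) ` {..<n}"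
  have "inj_on (\<lambda>i. \<beta> ^ (2 * i + 1)) {..<n}"
    unfolding inj_on_def beta_pow_eq_iff by simp
  then show "card ?R = degree (map_poly emb (negacyc_mod n))"
    using degree_negacyc_mod_n by (simp add: card_image)
  show "map_poly emb (negacyc_mod n) \<noteq> 0"
    using degree_negacyc_mod_n n_pos by auto
  have "(\<beta> ^ (2 * i + 1)) ^ n = - 1" for i
  proof -
    have "(\<beta> ^ (2 * i + 1)) ^ n = (\<beta> ^ n) ^ (2 * i + 1)"
      by (simp only: power_mult[symmetric] mult.commute)
    then show ?thesis
      by (simp add: beta_pow_n)
  qed
  then show "poly (map_poly emb (negacyc_mod n)) s = 0" if "s \<in> ?R" for s
    using that by (auto simp: negacyc_mod_def emb_poly.hom_add poly_monom)
  show "poly q s = 0" if s: "s \<in> ?R" for s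
  proof -
    obtain i where "s = \<beta> ^ (2 * i + 1)"
      using s by blast
    then show ?thesis
      using assms[of "2 * i + 1"] by simp
  qed
qed simp

lemma trace_word_in_code:
  assumes "t \<in> F"
  shows "trace_word t \<in> code"
proof -
  have "map_poly emb (negacyc_mod n) dvd map_poly emb (trace_word t * M)"
    using trace_word_times_M_vanishes[OF assms] by (rule negacyc_mod_dvd_if_vanishes)
  then have "gen * M dvd trace_word t * M"
    unfolding gen_times_M by (rule emb.dvd_map_poly_hom_imp_dvd)
  then have "gen dvd trace_word t"
    using M_neq_0 by simp
  then obtain s where s: "trace_word t = gen * s"
    by (rule dvdE)
  have "degree s < 2 * l"
  proof (cases "s = 0")
    case False
    have "degree gen + 2 * l = n"
      using gen_times_M degree_mult_eq[OF gen_neq_0 M_neq_0] degree_negacyc_mod_n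
      by (simp add: degree_M)
    then show ?thesis
      using degree_trace_word[of t] degree_mult_eq[OF gen_neq_0 False] s by simp
  qed (use l_ge_2 in simp)
  then show ?thesis
    unfolding code_eq using s by (auto simp: mult.commute)
qed

lemma ev_eq_sum:
  assumes "degree v < n"
  shows "ev v = (\<Sum>i<n. emb (coeff v i) * \<beta> ^ i)"
  using poly_eq_sum_lessThan[of "map_poly emb v" n \<beta>] assms by simp

lemma inner_trace_word:
  assumes "t \<in> F" "degree v < n"
  shows "emb (\<Sum>i<n. coeff (trace_word t) i * coeff v i) = Tr (t * ev v)"
proof -
  have "emb (\<Sum>i<n. coeff (trace_word t) i * coeff v i) = (\<Sum>i<n. Tr (t * \<beta> ^ i) * emb (coeff v i))"
    unfolding emb.hom_sum emb.hom_mult using emb_coeff_trace_word[OF assms(1)] by simp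
  also have "\<dots> = (\<Sum>i<n. Tr (emb (coeff v i) * (t * \<beta> ^ i)))"
    by (simp only: Tr_emb_mult mult.commute)
  also have "\<dots> = Tr (t * ev v)"
    unfolding ev_eq_sum[OF assms(2)] Tr_sum[symmetric] sum_distrib_left
    by (simp only: mult.left_commute)
  finally show ?thesis .
qed

lemma inj_on_trace_word: "inj_on trace_word F"
proof (rule inj_onI)
  fix t t'
  assume t: "t \<in> F" and t': "t' \<in> F" and eq: "trace_word t = trace_word t'"
  have zero: "Tr ((t - t') * \<beta> ^ i) = 0" if i: "i < n" for i
  proof -
    have "Tr (t * \<beta> ^ i) = Tr (t' * \<beta> ^ i)"
      using emb_coeff_trace_word[OF t i] emb_coeff_trace_word[OF t' i] eq by simp
    then show ?thesis
      by (simp add: left_diff_distrib Tr_diff)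
  qed
  show "t = t'"
  proof (rule ccontr)
    assume "t \<noteq> t'"
    then obtain s where "s \<in> F" and nonzero: "Tr (s * (t - t')) \<noteq> 0"
      using Tr_nondegenerate[of "t - t'"] by auto
    then obtain p where "degree p < 2 * l" "s = ev p"
      unfolding F_eq_image_ev by blast
    moreover from this have "degree p < n"
      using two_l_less_n by linarith
    ultimately have "Tr (s * (t - t')) = Tr (\<Sum>i<n. emb (coeff p i) * ((t - t') * \<beta> ^ i))"
      using ev_eq_sum by (simp add: sum_distrib_left sum_distrib_right mult_ac)
    also have "\<dots> = (\<Sum>i<n. emb (coeff p i) * Tr ((t - t') * \<beta> ^ i))"
      by (simp add: Tr_sum Tr_emb_mult)
    also have "\<dots> = 0"
      using zero by simp
    finally show False
      using nonzero by simp
  qed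
qed

lemma code_eq_trace_words: "code = trace_word ` F"
proof -
  have sub: "trace_word ` F \<subseteq> code"
    using trace_word_in_code by blast
  moreover have "card (trace_word ` F) = card code"
    using card_image[OF inj_on_trace_word] card_F card_code by simp
  ultimately show ?thesis
    using card_subset_eq[OF finite_code sub] by simp
qed

lemma orthogonal_code_iff:
  assumes "degree v < n"
  shows "(\<forall>c\<in>code. (\<Sum>i<n. coeff c i * coeff v i) = 0) \<longleftrightarrow> ev v = 0"
proof -
  have "(\<Sum>i<n. coeff (trace_word t) i * coeff v i) = 0 \<longleftrightarrow> Tr (t * ev v) = 0"
    if "t \<in> F" for t
    using inner_trace_word[OF that assms] emb.hom_0_iff by metis
  then have "(\<forall>c\<in>code. (\<Sum>i<n. coeff c i * coeff v i) = 0) \<longleftrightarrow> (\<forall>t\<in>F. Tr (t * ev v) = 0)"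
    unfolding code_eq_trace_words by simp
  also have "\<dots> \<longleftrightarrow> ev v = 0"
    using Tr_nondegenerate[of "ev v"] by (auto simp: Tr_0)
  finally show ?thesis .
qed

lemma dual_code_eq: "dual_code n code = {v. degree v < n \<and> ev v = 0}"
  unfolding dual_code_def using orthogonal_code_iff by blast

lemma dual_code_eq_multiples: "dual_code n code = {r * M | r. degree r < n - 2 * l}"
proof (rule Set.set_eqI)
  fix v
  have "degree v < n \<and> ev v = 0 \<longleftrightarrow> (\<exists>r. v = r * M \<and> degree r < n - 2 * l)"
  proof
    assume v: "degree v < n \<and> ev v = 0"
    then obtain r where "v = r * M"
      using M_dvd_iff by (metis dvd_def mult.commute)
    moreover have "degree r < n - 2 * l"
      using v \<open>v = r * M\<close> degree_mult_eq[of r M] M_neq_0 two_l_less_n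
      by (cases "r = 0") (auto simp: degree_M)
    ultimately show "\<exists>r. v = r * M \<and> degree r < n - 2 * l"
      by blast
  next
    assume "\<exists>r. v = r * M \<and> degree r < n - 2 * l"
    then obtain r where "v = r * M" "degree r < n - 2 * l"
      by blast
    then show "degree v < n \<and> ev v = 0"
      using degree_mult_eq[of r M] M_neq_0 n_pos
      by (cases "r = 0") (auto simp: degree_M ev_M emb_poly.hom_mult)
  qed
  then show "v \<in> dual_code n code \<longleftrightarrow> v \<in> {r * M | r. degree r < n - 2 * l}"
    unfolding dual_code_eq by blast
qed

lemma dim_dual_code: "code_dim (dual_code n code) = n - 2 * l"
  unfolding dual_code_eq_multiples using M_neq_0 by (rule dim_multiples_degree_less)

subsection \<open>The minimum distance of the code\<close>

text \<open>On the circle \<open>u\<^bsup>3^(k+l)\<^esup> = u\<^bsup>-3^k\<^esup>\<close>, so multiplying \<open>Tr (t u)\<close> by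
  \<open>u\<^bsup>3^(l-1)\<^esup>\<close> clears all negative exponents and leaves this polynomial.\<close>
definition trace_poly :: "'k \<Rightarrow> 'k poly" where
  "trace_poly t = (\<Sum>k<l. monom (t ^ 3 ^ k) (3 ^ (l - 1) + 3 ^ k)
    + monom (t ^ 3 ^ (k + l)) (3 ^ (l - 1) - 3 ^ k))"

lemma poly_trace_poly:
  assumes "u \<in> circle"
  shows "poly (trace_poly t) u = u ^ 3 ^ (l - 1) * Tr (t * u)"
proof -
  define a where "a = (3::nat) ^ (l - 1)"
  have "u ^ 3 ^ (k + l) = inverse (u ^ 3 ^ k)" for k
    using circle_pow_three_pow[OF assms]
    by (simp add: power_add power_mult power_inverse mult.commute[of _ "3 ^ l"])
  then have conj: "u ^ a * (t * u) ^ 3 ^ (k + l) = t ^ 3 ^ (k + l) * u ^ (a - 3 ^ k)" if "k < l" for k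
  proof -
    have "3 ^ k \<le> a"
      unfolding a_def using that by (intro power_increasing) auto
    then have "u ^ a = u ^ (a - 3 ^ k) * u ^ 3 ^ k"
      by (simp flip: power_add)
    then show ?thesis
      using circle_neq_0[OF assms] \<open>u ^ 3 ^ (k + l) = inverse (u ^ 3 ^ k)\<close>
      by (simp add: power_mult_distrib field_simps)
  qed
  have "Tr (t * u) = (\<Sum>k<l. (t * u) ^ 3 ^ k) + (\<Sum>k<l. (t * u) ^ 3 ^ (k + l))"
    unfolding Tr_def mult_2 sum_lessThan_add by (simp add: add.commute)
  then have "u ^ a * Tr (t * u)
      = (\<Sum>k<l. t ^ 3 ^ k * u ^ (a + 3 ^ k)) + (\<Sum>k<l. u ^ a * (t * u) ^ 3 ^ (k + l))"
    by (simp add: distrib_left sum_distrib_left power_mult_distrib power_add mult_ac)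
  also have "\<dots> = poly (trace_poly t) u"
    using conj by (simp add: trace_poly_def a_def poly_sum poly_monom sum.distrib)
  finally show ?thesis
    by (simp add: a_def)
qed

lemma degree_trace_poly: "degree (trace_poly t) \<le> 2 * 3 ^ (l - 1)"
  unfolding trace_poly_def
proof (intro degree_sum_le degree_add_le)
  fix k
  assume "k \<in> {..<l}"
  then have "(3::nat) ^ k \<le> 3 ^ (l - 1)"
    by (intro power_increasing) auto
  then show "degree (monom (t ^ 3 ^ k) (3 ^ (l - 1) + 3 ^ k)) \<le> 2 * 3 ^ (l - 1)"
    and "degree (monom (t ^ 3 ^ (k + l)) (3 ^ (l - 1) - 3 ^ k)) \<le> 2 * 3 ^ (l - 1)"
    by (auto intro: order.trans[OF degree_monom_le])
qed simp

lemma coeff_trace_poly_top: "coeff (trace_poly t) (2 * 3 ^ (l - 1)) = t ^ 3 ^ (l - 1)"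
proof -
  have "(3::nat) ^ (l - 1) + 3 ^ k = 2 * 3 ^ (l - 1) \<longleftrightarrow> (3::nat) ^ k = 3 ^ (l - 1)" for k
    by auto
  also have "(3::nat) ^ k = 3 ^ (l - 1) \<longleftrightarrow> k = l - 1" for k
    by (rule power_inject_exp) simp
  finally have top: "(3::nat) ^ (l - 1) + 3 ^ k = 2 * 3 ^ (l - 1) \<longleftrightarrow> k = l - 1" for k .
  moreover have "(3::nat) ^ (l - 1) - 3 ^ k \<noteq> 2 * 3 ^ (l - 1)" for k
    using diff_le_self[of "(3::nat) ^ (l - 1)" "3 ^ k"] zero_less_power[of "3::nat" "l - 1"]
    by linarith
  ultimately have "coeff (trace_poly t) (2 * 3 ^ (l - 1)) = (\<Sum>k<l. if k = l - 1 then t ^ 3 ^ k else 0)"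
    unfolding trace_poly_def coeff_sum coeff_add coeff_monom using top by (intro sum.cong) auto
  then show ?thesis
    using l_ge_2 by simp
qed

text \<open>The zeros \<open>i\<close> of \<open>i \<mapsto> Tr (t \<beta>\<^sup>i)\<close> below \<open>n\<close> together with their shifts \<open>i + n\<close>
  give distinct roots \<open>\<beta>\<^sup>i\<close> of \<open>trace_poly t\<close> on the circle.\<close>
lemma card_trace_zeros_le:
  assumes "t \<noteq> 0"
  shows "card {i. i < n \<and> Tr (t * \<beta> ^ i) = 0} \<le> 3 ^ (l - 1)"
proof -
  define Z where "Z = {i. i < n \<and> Tr (t * \<beta> ^ i) = 0}"
  define Z2 where "Z2 = Z \<union> (\<lambda>i. i + n) ` Z"
  have "finite Z" "Z \<inter> (\<lambda>i. i + n) ` Z = {}"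
    unfolding Z_def by auto
  then have card_Z2: "card Z2 = 2 * card Z"
    unfolding Z2_def by (simp add: card_Un_disjoint card_image)
  have "Z2 \<subseteq> {..<2 * n}"
    unfolding Z2_def Z_def by auto
  then have "inj_on (\<lambda>i. \<beta> ^ i) Z2"
    unfolding inj_on_def beta_pow_eq_iff by (metis lessThan_iff mod_less subsetD)
  moreover have "poly (trace_poly t) (\<beta> ^ i) = 0" if "i \<in> Z2" for i
  proof -
    have "Tr (t * \<beta> ^ i) = 0"
      using \<open>i \<in> Z2\<close> unfolding Z2_def Z_def by (auto simp: beta_pow_plus_n Tr_minus)
    then show ?thesis
      by (simp add: poly_trace_poly beta_pow_in_circle)
  qed
  moreover have "trace_poly t \<noteq> 0"
    using coeff_trace_poly_top[of t] assms by auto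
  ultimately have "card Z2 \<le> degree (trace_poly t)"
    using card_le_degree_if_roots[of "trace_poly t" "(\<lambda>i. \<beta> ^ i) ` Z2"] by (auto simp: card_image)
  then show ?thesis
    using card_Z2 degree_trace_poly[of t] unfolding Z_def by linarith
qed

lemma weight_trace_word:
  assumes "t \<in> F" "t \<noteq> 0"
  shows "(3 ^ (l - 1) + 1) div 2 \<le> weight n (trace_word t)"
proof -
  have "coeff (trace_word t) i = 0 \<longleftrightarrow> Tr (t * \<beta> ^ i) = 0" if "i < n" for i
    using emb_coeff_trace_word[OF assms(1) that] emb.hom_0_iff by metis
  then have "{i. i < n \<and> coeff (trace_word t) i \<noteq> 0} = {..<n} - {i. i < n \<and> Tr (t * \<beta> ^ i) = 0}"
    by auto
  then have "weight n (trace_word t) = n - card {i. i < n \<and> Tr (t * \<beta> ^ i) = 0}"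
    unfolding weight_def by (simp add: card_Diff_subset subset_eq)
  moreover have "(3 ^ (l - 1) + 1) div 2 = n - 3 ^ (l - 1)"
  proof -
    have "(3::nat) ^ l = 3 * 3 ^ (l - 1)"
      using power_Suc[of "3::nat" "l - 1"] l_ge_2 by simp
    then have "3 ^ (l - 1) + 1 = 2 * (n - 3 ^ (l - 1))"
      using two_n by linarith
    then show ?thesis
      by simp
  qed
  ultimately show ?thesis
    using card_trace_zeros_le[OF assms(2)] by linarith
qed

lemma min_distance_code: "(3 ^ (l - 1) + 1) div 2 \<le> min_distance n code"
proof (rule min_distance_ge)
  show "0 \<in> code"
    using code_eq l_ge_2 by force
  show "c - c' \<in> code" if c: "c \<in> code" "c' \<in> code" for c c'
  proof -
    obtain r r' where "c = r * gen" "degree r < 2 * l" "c' = r' * gen" "degree r' < 2 * l"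
      using c unfolding code_eq by blast
    then have "c - c' = (r - r') * gen" "degree (r - r') < 2 * l"
      by (simp_all add: left_diff_distrib degree_diff_less)
    then show ?thesis
      unfolding code_eq by blast
  qed
  show "gen \<in> code"
    unfolding code_eq using l_ge_2 by (auto intro!: exI[of _ 1])
  show "gen \<noteq> 0"
    by (rule gen_neq_0)
  show "(3 ^ (l - 1) + 1) div 2 \<le> weight n c" if "c \<in> code" "c \<noteq> 0" for c
    using that weight_trace_word trace_word_0 unfolding code_eq_trace_words by blast
qed

subsection \<open>The minimum distance of the dual code\<close>

lemma one_in_circle: "1 \<in> circle"
  using beta_pow_in_circle[of 0] by simp

lemma emb_mult_beta_pow_in_circle: "c \<noteq> 0 \<Longrightarrow> emb c * \<beta> ^ i \<in> circle"
  using emb_eq_1_or_minus_1[of c] one_in_circle minus_one_in_circle beta_pow_in_circle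
  by (auto intro: circle_mult)

lemma circle_eq_signed_beta_pow:
  assumes "x \<in> circle"
  obtains c j where "c \<noteq> 0" "j < n" "x = emb c * \<beta> ^ j"
proof -
  obtain i where "i < 2 * n" "x = \<beta> ^ i"
    using assms unfolding circle_eq by blast
  show thesis
  proof (cases "i < n")
    case True
    with \<open>x = \<beta> ^ i\<close> show thesis
      by (intro that[of 1 i]) simp_all
  next
    case False
    then have "x = emb (- 1) * \<beta> ^ (i - n)" "i - n < n"
      using \<open>x = \<beta> ^ i\<close> \<open>i < 2 * n\<close> beta_pow_plus_n[of "i - n"]
      by (simp_all add: emb.hom_uminus)
    then show thesis
      by (intro that[of "- 1" "i - n"]) simp_all
  qed
qed

lemma eq_if_signed_beta_pow_eq:
  assumes "i < n" "j < n" "c \<noteq> 0" "d \<noteq> 0"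
    and "emb c * \<beta> ^ i = emb d * \<beta> ^ j \<or> emb c * \<beta> ^ i = - (emb d * \<beta> ^ j)"
  shows "i = j"
proof -
  have "\<beta> ^ i = \<beta> ^ j \<or> \<beta> ^ i = - (\<beta> ^ j)"
    using emb_eq_1_or_minus_1[OF assms(3)] emb_eq_1_or_minus_1[OF assms(4)] assms(5)
    by (rule eq_or_eq_minus_if_signs)
  then have "i mod (2 * n) = j mod (2 * n) \<or> i mod (2 * n) = (j + n) mod (2 * n)"
    by (simp add: beta_pow_eq_iff flip: beta_pow_plus_n)
  then show ?thesis
    using assms(1,2) by auto
qed

lemma sum_inverse_eq_0_if_circle_sum_eq_0:
  assumes "W \<subseteq> circle" "(\<Sum>w\<in>W. w) = 0"
  shows "(\<Sum>w\<in>W. inverse w) = 0"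
proof -
  have "(\<Sum>w\<in>W. inverse w) = (\<Sum>w\<in>W. w ^ 3 ^ l)"
    using assms(1) circle_pow_three_pow by (intro sum.cong) auto
  also have "\<dots> = 0"
    by (simp add: assms(2) power_0_left flip: power_three_pow_sum)
  finally show ?thesis .
qed

text \<open>The terms \<open>v\<^sub>i \<beta>\<^sup>i\<close> of \<open>ev v\<close> are distinct and pairwise non-opposite, since
  \<open>\<pm>\<beta>\<^sup>i\<close> for \<open>i < n\<close> are the \<open>2n\<close> distinct points of the circle.\<close>
lemma circle_zero_sum_of_ev_eq_0:
  assumes "degree v < n" "ev v = 0" "v \<noteq> 0"
  obtains W where "finite W" "W \<noteq> {}" "W \<subseteq> circle" "card W = weight n v"
    "\<And>w. w \<in> W \<Longrightarrow> - w \<notin> W" "(\<Sum>w\<in>W. w) = 0"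
proof -
  define S where "S = {i. i < n \<and> coeff v i \<noteq> 0}"
  define u where "u i = emb (coeff v i) * \<beta> ^ i" for i
  have u_circle: "u i \<in> circle" if "i \<in> S" for i
    using that emb_mult_beta_pow_in_circle unfolding S_def u_def by blast
  have u_eq: "i = j" if "i \<in> S" "j \<in> S" "u i = u j \<or> u i = - u j" for i j
    using that eq_if_signed_beta_pow_eq unfolding S_def u_def by blast
  have "inj_on u S"
    using u_eq by (auto simp: inj_on_def)
  have "S \<noteq> {}"
    using weight_pos[OF assms(3,1)] unfolding weight_def S_def card_gt_0_iff by blast
  moreover have "- w \<notin> u ` S" if "w \<in> u ` S" for w
  proof
    assume "- w \<in> u ` S"
    with that obtain i j where "i \<in> S" "j \<in> S" "w = u i" "- w = u j"
      by blast
    then have "u i = - u j"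
      by (metis minus_minus)
    with u_eq \<open>i \<in> S\<close> \<open>j \<in> S\<close> have "u i = - u i"
      by blast
    then show False
      using two_neq_0 circle_neq_0[OF u_circle[OF \<open>i \<in> S\<close>]] by (simp add: minus_equation_iff)
  qed
  moreover have "(\<Sum>w\<in>u ` S. w) = (\<Sum>i<n. u i)"
    unfolding sum.reindex[OF \<open>inj_on u S\<close>] comp_def
    by (rule sum.mono_neutral_left) (auto simp: S_def u_def)
  then have "(\<Sum>w\<in>u ` S. w) = 0"
    using ev_eq_sum[OF assms(1)] assms(2) by (simp add: u_def)
  ultimately show thesis
    using u_circle card_image[OF \<open>inj_on u S\<close>]
    by (intro that[of "u ` S"]) (auto simp: S_def weight_def)
qed

lemma weight_ge_5_if_ev_eq_0:
  assumes "degree v < n" "ev v = 0" "v \<noteq> 0"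
  shows "5 \<le> weight n v"
proof (rule ccontr)
  assume "\<not> 5 \<le> weight n v"
  obtain W where W: "finite W" "W \<noteq> {}" "W \<subseteq> circle" "card W = weight n v"
    "\<And>w. w \<in> W \<Longrightarrow> - w \<notin> W" "(\<Sum>w\<in>W. w) = 0"
    using circle_zero_sum_of_ev_eq_0[OF assms] by blast
  have "card W \<le> 4"
    using W(4) \<open>\<not> 5 \<le> weight n v\<close> by simp
  moreover have "0 \<notin> W"
    using W(3) circle_neq_0 by blast
  ultimately have "(\<Sum>w\<in>W. inverse w) \<noteq> 0"
    using inverse_sum_nonzero_if_small_zero_sum[OF three_eq_0 W(1,2)] W(5,6) by blast
  then show False
    using sum_inverse_eq_0_if_circle_sum_eq_0[OF W(3,6)] by simp
qed

lemma word_of_circle_zero_sum: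
  assumes "finite W" "W \<subseteq> circle" "\<And>w. w \<in> W \<Longrightarrow> - w \<notin> W" "(\<Sum>w\<in>W. w) = 0"
  obtains v where "degree v < n" "ev v = 0" "weight n v = card W"
proof -
  have "\<exists>c j. c \<noteq> 0 \<and> j < n \<and> w = emb c * \<beta> ^ j" if "w \<in> W" for w
    using circle_eq_signed_beta_pow that assms(2) by (metis subsetD)
  then obtain c j where cj: "\<And>w. w \<in> W \<Longrightarrow> c w \<noteq> 0 \<and> j w < n \<and> w = emb (c w) * \<beta> ^ j w"
    by metis
  have "inj_on j W"
  proof (rule inj_onI)
    fix w w'
    assume w: "w \<in> W" "w' \<in> W" "j w = j w'"
    then have "w = w' \<or> w = - w'"
      using cj[OF w(1)] cj[OF w(2)] emb_eq_1_or_minus_1 by (metis minus_minus mult_minus_left)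
    then show "w = w'"
      using assms(3) w(1,2) by auto
  qed
  define v where "v = (\<Sum>w\<in>W. monom (c w) (j w))"
  have "coeff v (j w) = c w" if "w \<in> W" for w
  proof -
    have "coeff v (j w) = (\<Sum>w'\<in>W. if w' = w then c w' else 0)"
      unfolding v_def coeff_sum coeff_monom using \<open>inj_on j W\<close> that
      by (intro sum.cong) (auto simp: inj_on_def)
    then show ?thesis
      using that assms(1) by simp
  qed
  moreover have "coeff v i = 0" if "i \<notin> j ` W" for i
    unfolding v_def coeff_sum coeff_monom using that by (intro sum.neutral) auto
  ultimately have "{i. i < n \<and> coeff v i \<noteq> 0} = j ` W"
    using cj by force
  then have "weight n v = card W"
    unfolding weight_def using card_image[OF \<open>inj_on j W\<close>] by simp
  moreover have "degree v < n"
    unfolding v_def using cj n_pos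
    by (intro degree_sum_less) (auto intro: le_less_trans[OF degree_monom_le])
  moreover have "ev v = (\<Sum>w\<in>W. emb (c w) * \<beta> ^ j w)"
    unfolding v_def by (simp add: emb_poly.hom_sum poly_sum poly_monom)
  then have "ev v = 0"
    using cj assms(4) by simp
  ultimately show thesis
    using that by blast
qed

subsection \<open>A dual codeword of weight 5\<close>

definition E :: "'k set" where
  "E = {z. z ^ 3 ^ l = z}"

definition E' :: "'k set" where
  "E' = E - {0, 1, - 1}"

lemma finite_E': "finite E'" and card_E'_le: "card E' \<le> 3 ^ l - 3"
proof -
  have E: "finite E" "card E \<le> 3 ^ l"
    unfolding E_def using finite_card_pow_eq_self[of "3 ^ l", where 'a = 'k] nine_le_three_pow
    by simp_all
  have "{0, 1, - 1} \<subseteq> E"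
    unfolding E_def by (simp add: power_0_left)
  moreover have "card {0, 1, - 1 :: 'k} = 3"
    using one_neq_minus_1 by simp
  ultimately show "finite E'" "card E' \<le> 3 ^ l - 3"
    unfolding E'_def using E by (simp_all add: card_Diff_subset)
qed

lemma E'_uminus: "z \<in> E' \<Longrightarrow> - z \<in> E'"
  unfolding E'_def E_def by (auto simp: power_three_pow_minus minus_equation_iff)

lemma E'_one_minus: "z \<in> E' \<Longrightarrow> 1 - z \<in> E'"
  unfolding E'_def E_def using two_eq_minus_1
  by (auto simp: power_three_pow_diff algebra_simps)

definition circle' :: "'k set" where
  "circle' = {x \<in> circle. x ^ 2 \<noteq> 1 \<and> x ^ 2 \<noteq> - 1}"

text \<open>On the circle \<open>x + x\<^sup>-\<^sup>1 = x + x\<^bsup>3^l\<^esup>\<close> is the trace down to the subfield \<open>E\<close>.\<close>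
definition T :: "'k set" where
  "T = (\<lambda>x. x + inverse x) ` circle'"

lemma circle'_neq_0: "x \<in> circle' \<Longrightarrow> x \<noteq> 0"
  unfolding circle'_def using circle_neq_0 by blast

lemma circle'_uminus: "x \<in> circle' \<Longrightarrow> - x \<in> circle'"
  unfolding circle'_def circle_def by simp

lemma circle'_inverse:
  assumes "x \<in> circle'"
  shows "inverse x \<in> circle'"
proof -
  have "inverse (x ^ 2) = 1 \<longleftrightarrow> x ^ 2 = 1" "inverse (x ^ 2) = - 1 \<longleftrightarrow> x ^ 2 = - 1"
    by (metis inverse_inverse_eq inverse_minus_eq inverse_1)+
  then show ?thesis
    using assms circle_inverse unfolding circle'_def by (simp add: power_inverse)
qed

lemma circle'_neq_inverse:
  assumes "x \<in> circle'"
  shows "x \<noteq> inverse x"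
proof
  assume "x = inverse x"
  then have "x ^ 2 = x * inverse x"
    by (simp add: power2_eq_square)
  then show False
    using assms circle'_neq_0[OF assms] unfolding circle'_def by simp
qed

lemma plus_inverse_in_E':
  assumes "x \<in> circle'"
  shows "x + inverse x \<in> E'"
proof -
  have x: "x \<in> circle" "x ^ 2 \<noteq> 1" "x ^ 2 \<noteq> - 1" "x \<noteq> 0"
    using assms circle'_neq_0 unfolding circle'_def by auto
  have x_times: "x * (x + inverse x) = x ^ 2 + 1"
    using x(4) by (simp add: algebra_simps power2_eq_square)
  have "(x + inverse x) ^ 3 ^ l = inverse x + x"
    using circle_pow_three_pow[OF x(1)] by (simp add: power_three_pow_add power_inverse)
  then have "x + inverse x \<in> E"
    unfolding E_def by (simp add: add.commute)
  moreover have "x + inverse x \<noteq> 0"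
    using x_times x(3) by (auto simp: eq_neg_iff_add_eq_0)
  moreover have "x + inverse x \<noteq> 1"
  proof
    assume "x + inverse x = 1"
    then have "(x + 1) ^ 2 = 3 * x"
      using x_times by (simp add: power2_eq_square algebra_simps)
    then have "x = - 1"
      using three_eq_0 by (simp add: eq_neg_iff_add_eq_0)
    then show False
      using x(2) by simp
  qed
  moreover have "x + inverse x \<noteq> - 1"
  proof
    assume "x + inverse x = - 1"
    then have "(x - 1) ^ 2 = - 3 * x"
      using x_times by (simp add: power2_eq_square algebra_simps)
    then have "x = 1"
      using three_eq_0 by simp
    then show False
      using x(2) by simp
  qed
  ultimately show ?thesis
    unfolding E'_def by simp
qed

lemma T_subset_E': "T \<subseteq> E'"
  unfolding T_def using plus_inverse_in_E' by blast

lemma T_uminus: "t \<in> T \<Longrightarrow> - t \<in> T"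
  unfolding T_def using circle'_uminus by (force simp: inverse_minus_eq)

lemma card_circle': "3 ^ l - 3 \<le> card circle'"
proof -
  have finite_sq: "finite {x::'k. x ^ 2 = c}" and card_sq: "card {x::'k. x ^ 2 = c} \<le> 2" for c
    using finite_card_pow_eq_const[of 2 c] by simp_all
  have "circle - circle' \<subseteq> {x. x ^ 2 = 1} \<union> {x. x ^ 2 = - 1}"
    unfolding circle'_def by blast
  then have "card (circle - circle') \<le> card ({x. x ^ 2 = 1} \<union> {x::'k. x ^ 2 = - 1})"
    by (intro card_mono) (simp_all add: finite_sq)
  also have "\<dots> \<le> 4"
    using card_Un_le[of "{x::'k. x ^ 2 = 1}" "{x. x ^ 2 = - 1}"] card_sq[of 1] card_sq[of "- 1"]
    by linarith
  finally have "card (circle - circle') \<le> 4" .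
  moreover have "card circle = 2 * n"
    unfolding circle_eq by (simp add: card_image inj_on_def beta_pow_eq_iff)
  moreover have "circle = circle' \<union> (circle - circle')"
    unfolding circle'_def by blast
  then have "card circle \<le> card circle' + card (circle - circle')"
    by (metis card_Un_le)
  ultimately show ?thesis
    using two_n by linarith
qed

lemma card_T: "3 ^ l - 3 \<le> 2 * card T"
proof -
  have fibre: "card {x \<in> circle'. x + inverse x = t} \<le> 2" for t
  proof -
    have "poly [:1, - t, 1:] x = 0" if "x \<in> circle'" "x + inverse x = t" for x
      using that circle'_neq_0[OF that(1)] by (auto simp: algebra_simps)
    then show ?thesis
      using card_le_degree_if_roots[of "[:1, - t, 1:]" "{x \<in> circle'. x + inverse x = t}"] by auto
  qed
  have "finite T"
    using T_subset_E' finite_E' finite_subset by blast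
  have "(\<Union>t\<in>T. {x \<in> circle'. x + inverse x = t}) = circle'"
    unfolding T_def by auto
  moreover have "card (\<Union>t\<in>T. {x \<in> circle'. x + inverse x = t})
      \<le> (\<Sum>t\<in>T. card {x \<in> circle'. x + inverse x = t})"
    by (rule card_UN_le[OF \<open>finite T\<close>])
  ultimately have "card circle' \<le> (\<Sum>t\<in>T. card {x \<in> circle'. x + inverse x = t})"
    by simp
  also have "\<dots> \<le> (\<Sum>t\<in>T. 2)"
    by (rule sum_mono) (rule fibre)
  also have "\<dots> = 2 * card T"
    by simp
  finally show ?thesis
    using card_circle' by linarith
qed

text \<open>Counting: if \<open>T\<close> and \<open>1 - T\<close> were disjoint they would fill \<open>E'\<close>, and \<open>t - 1 \<in> 1 - T\<close>
  for \<open>t \<in> T\<close> would force \<open>1 - (-t) \<in> T\<close>.\<close>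
lemma exists_T_one_minus: "\<exists>t\<in>T. 1 - t \<in> T"
proof (rule ccontr)
  assume "\<not> (\<exists>t\<in>T. 1 - t \<in> T)"
  then have disjoint: "1 - t \<notin> T" if "t \<in> T" for t
    using that by blast
  let ?R = "(\<lambda>t. 1 - t) ` T"
  have "finite T"
    using T_subset_E' finite_E' finite_subset by blast
  have "card ?R = card T"
    by (rule card_image) (auto simp: inj_on_def)
  then have "card (T \<union> ?R) = 2 * card T"
    using disjoint \<open>finite T\<close> by (subst card_Un_disjoint) auto
  moreover have "T \<union> ?R \<subseteq> E'"
    using T_subset_E' E'_one_minus by blast
  moreover have "card E' \<le> 2 * card T"
    using card_T card_E'_le by linarith
  ultimately have "T \<union> ?R = E'"
    using card_seteq[OF finite_E'] by simp
  have "T \<noteq> {}"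
    using card_T nine_le_three_pow by auto
  then obtain t where "t \<in> T"
    by blast
  then have "t - 1 \<in> E'"
    using E'_uminus[OF E'_one_minus] T_subset_E' by fastforce
  moreover have "t - 1 \<notin> T"
    using T_uminus disjoint[OF \<open>t \<in> T\<close>] by fastforce
  ultimately obtain s where "s \<in> T" "t - 1 = 1 - s"
    using \<open>T \<union> ?R = E'\<close> by blast
  then have "s = 2 - t"
    by (simp add: algebra_simps)
  then have "- s = 1 - (- t)"
    using two_eq_minus_1 by simp
  then have "1 - (- t) \<in> T"
    using T_uminus[OF \<open>s \<in> T\<close>] by simp
  then show False
    using disjoint[OF T_uminus[OF \<open>t \<in> T\<close>]] by simp
qed

lemma plus_inverse_pair:
  assumes "a + inverse a = t" "b + inverse b = 1 - t" "t \<in> E'"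
  shows "a \<noteq> b" "a + b \<noteq> 0"
proof
  assume "a = b"
  then have "t = 1 - t"
    using assms(1,2) by simp
  then have "- t = 1"
    using two_eq_minus_1 by (simp add: algebra_simps)
  then have "t = - 1"
    by (metis minus_minus)
  then show False
    using assms(3) unfolding E'_def by simp
next
  show "a + b \<noteq> 0"
  proof
    assume "a + b = 0"
    then have "b = - a"
      by (simp add: eq_neg_iff_add_eq_0 add.commute)
    then have "b + inverse b = - (a + inverse a)"
      by (simp add: inverse_minus_eq)
    then have "1 - t = - t"
      using assms(1,2) by simp
    then show False
      by simp
  qed
qed

lemma circle'_nontrivial:
  assumes "a \<in> circle'"
  shows "a \<noteq> 1" "a \<noteq> - 1" "a + a \<noteq> 0" "a + - 1 \<noteq> 0"
  using assms circle'_neq_0[OF assms] two_neq_0 unfolding circle'_def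
  by (auto simp flip: mult_2)

text \<open>With \<open>x + x\<^sup>-\<^sup>1 = t\<close> and \<open>y + y\<^sup>-\<^sup>1 = 1 - t\<close> the five elements \<open>x, x\<^sup>-\<^sup>1, y, y\<^sup>-\<^sup>1, -1\<close>
  of the circle sum to zero.\<close>
lemma exists_dual_weight_5: "\<exists>v. degree v < n \<and> ev v = 0 \<and> weight n v = 5"
proof -
  obtain t where "t \<in> T" "1 - t \<in> T"
    using exists_T_one_minus by blast
  obtain x where x: "x \<in> circle'" and tx: "x + inverse x = t"
    using \<open>t \<in> T\<close> unfolding T_def by (metis imageE)
  obtain y where y: "y \<in> circle'" and ty: "y + inverse y = 1 - t"
    using \<open>1 - t \<in> T\<close> unfolding T_def by (metis imageE)
  have t: "t \<in> E'" "t \<noteq> 0" "1 - t \<noteq> 0"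
    using T_subset_E' \<open>t \<in> T\<close> \<open>1 - t \<in> T\<close> unfolding E'_def by auto
  have x': "inverse x \<in> circle'" "inverse x + inverse (inverse x) = t"
    using circle'_inverse[OF x] tx by (simp_all add: add.commute)
  have y': "inverse y \<in> circle'" "inverse y + inverse (inverse y) = 1 - t"
    using circle'_inverse[OF y] ty by (simp_all add: add.commute)
  note pairs = plus_inverse_pair[OF tx ty t(1)] plus_inverse_pair[OF tx y'(2) t(1)]
    plus_inverse_pair[OF x'(2) ty t(1)] plus_inverse_pair[OF x'(2) y'(2) t(1)]
  note singles = circle'_nontrivial[OF x] circle'_nontrivial[OF y] circle'_nontrivial[OF x'(1)]
    circle'_nontrivial[OF y'(1)] circle'_neq_inverse[OF x] circle'_neq_inverse[OF y]
  have self_pairs: "x + inverse x \<noteq> 0" "y + inverse y \<noteq> 0" "(- 1 :: 'k) + - 1 \<noteq> 0"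
    using tx ty t two_neq_0 by (simp_all flip: mult_2)
  define W where "W = set [x, inverse x, y, inverse y, - 1]"
  have distinct: "distinct [x, inverse x, y, inverse y, - 1]"
    using pairs singles by simp
  have "a + b \<noteq> 0" if "a \<in> W" "b \<in> W" for a b
    using that pairs singles self_pairs unfolding W_def by (auto simp: add.commute)
  then have no_opposite: "- w \<notin> W" if "w \<in> W" for w
    using that by fastforce
  have "finite W"
    unfolding W_def by simp
  have "W \<subseteq> circle"
    using x y x'(1) y'(1) minus_one_in_circle unfolding W_def circle'_def by auto
  have "(\<Sum>w\<in>W. w) = 0"
  proof -
    have "(\<Sum>w\<in>W. w) = (x + inverse x) + (y + inverse y) - 1"
      unfolding W_def sum.distinct_set_conv_list[OF distinct] by (simp add: algebra_simps)
    then show ?thesis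
      using tx ty by simp
  qed
  then obtain v where "degree v < n" "ev v = 0" "weight n v = card W"
    using word_of_circle_zero_sum[OF \<open>finite W\<close> \<open>W \<subseteq> circle\<close> no_opposite] by blast
  moreover have "card W = 5"
    unfolding W_def using distinct_card[OF distinct] by simp
  ultimately show ?thesis
    by auto
qed

lemma min_distance_dual_code: "min_distance n (dual_code n code) = 5"
proof -
  obtain v where v: "degree v < n" "ev v = 0" "weight n v = 5"
    using exists_dual_weight_5 by blast
  have "v \<in> dual_code n code" "v \<noteq> 0" "0 \<in> dual_code n code"
    using v n_pos by (auto simp: dual_code_eq weight_def)
  moreover have "c - c' \<in> dual_code n code"
    if "c \<in> dual_code n code" "c' \<in> dual_code n code" for c c'
    using that by (simp add: dual_code_eq degree_diff_less emb_poly.hom_minus)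
  moreover have "5 \<le> weight n c" if "c \<in> dual_code n code" "c \<noteq> 0" for c
    using that weight_ge_5_if_ev_eq_0 by (simp add: dual_code_eq)
  ultimately have "5 \<le> min_distance n (dual_code n code)"
    by (intro min_distance_ge)
  moreover have "min_distance n (dual_code n code) \<le> 5"
    using min_distance_le_weight[OF \<open>0 \<in> dual_code n code\<close> \<open>v \<in> dual_code n code\<close> \<open>v \<noteq> 0\<close>, of n] v(3)
    by simp
  ultimately show ?thesis
    by simp
qed

end

theorem theorem20:
  fixes l n :: nat and \<beta> :: "'k::field" and M :: "'p::prime_card mod_ring poly"
  assumes "CARD('p) = 3"
    and "CHAR('k) = 3"
    and "l \<ge> 2"
    and "n = (3 ^ l + 1) div 2"
    and "primitive_root_of_unity (2 * n) \<beta>"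
    and "is_min_poly \<beta> M"
  shows "code_dim (negacyclic_code_check n M) = 2 * l
       \<and> min_distance n (negacyclic_code_check n M) \<ge> (3 ^ (l - 1) + 1) div 2
       \<and> code_dim (dual_code n (negacyclic_code_check n M)) = n - 2 * l
       \<and> min_distance n (dual_code n (negacyclic_code_check n M)) = 5"
proof -
  interpret ternary_negacyclic l n \<beta> M
    using assms by unfold_locales
  show ?thesis
    using dim_code min_distance_code dim_dual_code min_distance_dual_code by blast
qed

end
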